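(* Let $(x,y,C)\in Q(r)$ with $r\ge5$. Then $d:J\times J\to\mathbb R$, $d(j_1,j_2):=1-y_{j_1,j_2}$, is a semimetric on $J$ (i.e. $d\ge0$, $d(j,j)=0$, $d$ is symmetric, and $d(j_1,j_3)\le d(j_1,j_2)+d(j_2,j_3)$ for all $j_1,j_2,j_3\in J$).
   Context: Fix a finite set $J$ of jobs, a partial order $\prec$ on $J$, and $c,S,m\in\mathbb N$. Sherali–Adams lift: for a polytope $K=\{x\in\mathbb R^{V}:Ax\ge b\}$ on a finite index set $V$ and $r\ge0$, $SA_r(K)$ is the set of vectors $y$ indexed by subsets of $V$ of size at most $r+1$ with $y_\emptyset=1$ and, for every row $\ell$ and all $I,J'\subseteq V$ with $|I|+|J'|\le r$, $\sum_{H\subseteq J'}(-1)^{|H|}\big(\sum_{v\in V}A_{\ell,v}y_{I\cup H\cup\{v\}}-b_\ell y_{I\cup H}\big)\ge0$. Scheduling LP: let $V=J\times[m]\times\{0,\dots,S-1\}$ and let $K\subseteq\mathbb R^V$ be the set of $x$ with $\sum_{i\in[m]}\sum_{s}x_{j,i,s}=1$ for all $j\in J$, $\sum_{j\in J}x_{j,i,s}\le c$ for all $i,s$, and $0\le x_{j,i,s}\le1$. For $x\in SA_r(K)$ write $x_{j,i,s}=x_{\{(j,i,s)\}}$ and $x_{(j_1,i_1,s_1),(j_2,i_2,s_2)}=x_{\{(j_1,i_1,s_1),(j_2,i_2,s_2)\}}$. $Q(r)$ is the set of triples $(x,y,C)$ with $x\in SA_r(K)$, $y\in\mathbb R^{J\times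 J}$, $C\in\mathbb R^J$ satisfying $y_{j_1,j_2}=\sum_{s=0}^{S-1}\sum_{i\in[m]}x_{(j_1,i,s),(j_2,i,s)}$ for all $j_1,j_2\in J$, $C_{j_2}\ge C_{j_1}+(1-y_{j_1,j_2})$ for all $j_1\prec j_2$, and $C_j\ge0$ for all $j$. *)

theory Defs
  imports Complex_Main
begin

text \<open>Generic Sherali--Adams lift of a polytope given by rows (a, b), meaning
  the constraint sum_{v in V} a v * x v >= b.  A lifted vector is a function on
  subsets of V; only its values on subsets of size at most r+1 are used.\<close>

definition SA :: "nat \<Rightarrow> 'v set \<Rightarrow> (('v \<Rightarrow> real) \<times> real) set \<Rightarrow> ('v set \<Rightarrow> real) set" where
  "SA r V rows = {y. y {} = 1 \<and>
     (\<forall>(a, b) \<in> rows. \<forall>I J'. I \<subseteq> V \<longrightarrow> J' \<subseteq> V \<longrightarrow> card I + card J' \<le> r \<longrightarrow>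
        (\<Sum>H\<in>Pow J'. (-1) ^ card H *
           ((\<Sum>v\<in>V. a v * y (I \<union> H \<union> {v})) - b * y (I \<union> H))) \<ge> 0)}"

definition schedV :: "'j set \<Rightarrow> nat \<Rightarrow> nat \<Rightarrow> ('j \<times> nat \<times> nat) set" where
  "schedV J m S = J \<times> {..<m} \<times> {..<S}"

text \<open>Rows of the scheduling LP written as A x >= b: each equality as two
  inequalities, the capacity constraint negated, and the box constraints.\<close>

definition schedRows :: "'j set \<Rightarrow> nat \<Rightarrow> nat \<Rightarrow> nat \<Rightarrow> ((('j \<times> nat \<times> nat) \<Rightarrow> real) \<times> real) set" where
  "schedRows J c S m =
     (\<Union>j\<in>J. {((\<lambda>v. if fst v = j then 1 else 0), 1),
              ((\<lambda>v. if fst v = j then -1 else 0), -1)})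
   \<union> (\<Union>i\<in>{..<m}. \<Union>s\<in>{..<S}. {((\<lambda>v. if snd v = (i, s) then -1 else 0), - real c)})
   \<union> (\<Union>w\<in>schedV J m S. {((\<lambda>v. if v = w then 1 else 0), 0),
                        ((\<lambda>v. if v = w then -1 else 0), -1)})"

definition SAsched :: "'j set \<Rightarrow> nat \<Rightarrow> nat \<Rightarrow> nat \<Rightarrow> nat \<Rightarrow> (('j \<times> nat \<times> nat) set \<Rightarrow> real) set" where
  "SAsched J c S m r = SA r (schedV J m S) (schedRows J c S m)"

definition Q :: "'j set \<Rightarrow> ('j \<Rightarrow> 'j \<Rightarrow> bool) \<Rightarrow> nat \<Rightarrow> nat \<Rightarrow> nat \<Rightarrow> nat \<Rightarrow>
    ((('j \<times> nat \<times> nat) set \<Rightarrow> real) \<times> ('j \<Rightarrow> 'j \<Rightarrow> real) \<times> ('j \<Rightarrow> real)) set" where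
  "Q J prec c S m r = {(x, y, C).
     x \<in> SAsched J c S m r \<and>
     (\<forall>j1\<in>J. \<forall>j2\<in>J. y j1 j2 = (\<Sum>s<S. \<Sum>i<m. x {(j1, i, s), (j2, i, s)})) \<and>
     (\<forall>j1\<in>J. \<forall>j2\<in>J. prec j1 j2 \<longrightarrow> C j2 \<ge> C j1 + (1 - y j1 j2)) \<and>
     (\<forall>j\<in>J. C j \<ge> 0)}"

definition semimetric_on :: "'a set \<Rightarrow> ('a \<Rightarrow> 'a \<Rightarrow> real) \<Rightarrow> bool" where
  "semimetric_on A d \<longleftrightarrow>
     (\<forall>a\<in>A. \<forall>b\<in>A. d a b \<ge> 0) \<and> (\<forall>a\<in>A. d a a = 0) \<and>
     (\<forall>a\<in>A. \<forall>b\<in>A. d a b = d b a) \<and>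
     (\<forall>a\<in>A. \<forall>b\<in>A. \<forall>e\<in>A. d a e \<le> d a b + d b e)"

end

theory Submission
  imports Defs
begin

text \<open>In every slot (i, s), the level-2 lift values x{j, j'} behave like the probabilities
  that both j and j' occupy that slot.  The upper-box row x_w \<le> 1 multiplied by
  x_u (1 - x_t) gives x{w,u} + x{u,t} \<le> x{u} + x{u,w,t}, and multiplied by x_w x_t it gives
  x{u,w,t} \<le> x{w,t}; summing over slots yields y(a,b) + y(b,e) \<le> 1 + y(a,e), using that
  job b occupies slots with total mass 1.\<close>

lemma SA_rowD:
  assumes "x \<in> SA r V rows" "(a, b) \<in> rows" "I \<subseteq> V" "J' \<subseteq> V" "card I + card J' \<le> r"
  shows "(\<Sum>H\<in>Pow J'. (-1) ^ card H *
           ((\<Sum>v\<in>V. a v * x (I \<union> H \<union> {v})) - b * x (I \<union> H))) \<ge> 0"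
  using assms unfolding SA_def by blast

lemma sum_neg_indicator:
  assumes "finite V" "w \<in> V"
  shows "(\<Sum>v\<in>V. (if v = w then -1 else 0) * f v) = - (f w :: real)"
proof -
  have "(\<Sum>v\<in>V. (if v = w then -1 else 0) * f v) = (\<Sum>v\<in>V. if v = w then - f v else 0)"
    by (rule sum.cong) auto
  also have "\<dots> = - f w" using assms by (simp add: sum.delta)
  finally show ?thesis .
qed

lemma SA_upper_box_mono:
  assumes "x \<in> SA r V rows" "finite V" "w \<in> V"
    and "((\<lambda>v. if v = w then -1 else 0), -1) \<in> rows"
    and "I \<subseteq> V" "card I \<le> r"
  shows "x (insert w I) \<le> x I"
  using SA_rowD[OF assms(1,4,5), of "{}"] assms(6) sum_neg_indicator[OF assms(2,3)] by simp

lemma SA_upper_box_inclusion_exclusion: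
  assumes "x \<in> SA r V rows" "finite V" "w \<in> V" "u \<in> V"
    and "((\<lambda>v. if v = w then -1 else 0), -1) \<in> rows"
    and "I \<subseteq> V" "card I < r"
  shows "x (insert u I) + x (insert w I) \<le> x I + x (insert w (insert u I))"
proof -
  have "Pow {u} = {{}, {u}}" by auto
  then show ?thesis
    using SA_rowD[OF assms(1,5,6), of "{u}"] assms(4,7) sum_neg_indicator[OF assms(2,3)]
    by (simp add: insert_commute)
qed

lemma SA_pair_le_single:
  assumes "x \<in> SA r V rows" "finite V" "w \<in> V" "u \<in> V" "r \<ge> 1"
    and "((\<lambda>v. if v = w then -1 else 0), -1) \<in> rows"
  shows "x {w, u} \<le> x {u}"
  using SA_upper_box_mono[OF assms(1-3,6), of "{u}"] assms(4,5) by simp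

lemma SA_pair_triangle:
  assumes "x \<in> SA r V rows" "finite V" "w \<in> V" "u \<in> V" "t \<in> V" "r \<ge> 2"
    and "\<And>v. v \<in> V \<Longrightarrow> ((\<lambda>v'. if v' = v then -1 else 0), -1) \<in> rows"
  shows "x {w, u} + x {u, t} \<le> x {u} + x {w, t}"
proof -
  have "x {t, u} + x {w, u} \<le> x {u} + x {w, t, u}"
    using SA_upper_box_inclusion_exclusion[OF assms(1-3,5) assms(7)[OF assms(3)], of "{u}"]
      assms(4,6) by simp
  moreover have "x {u, w, t} \<le> x {w, t}"
    using SA_upper_box_mono[OF assms(1,2,4) assms(7)[OF assms(4)], of "{w, t}"] assms(3,5,6)
    by (simp add: card_insert_if)
  ultimately show ?thesis by (simp add: insert_commute)
qed

lemma SA_equality_row: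
  assumes "x \<in> SA r V rows" "(a, b) \<in> rows" "(\<lambda>v. - a v, - b) \<in> rows"
  shows "(\<Sum>v\<in>V. a v * x {v}) = b"
proof -
  have "x {} = 1" using assms(1) unfolding SA_def by blast
  moreover have "(\<Sum>v\<in>V. a v * x {v}) - b * x {} \<ge> 0"
    using SA_rowD[OF assms(1,2), of "{}" "{}"] by simp
  moreover have "(\<Sum>v\<in>V. - a v * x {v}) + b * x {} \<ge> 0"
    using SA_rowD[OF assms(1,3), of "{}" "{}"] by simp
  ultimately show ?thesis by (simp add: sum_negf)
qed

lemma finite_schedV: "finite J \<Longrightarrow> finite (schedV J m S)"
  by (simp add: schedV_def)

lemma schedRows_upper_box:
  "w \<in> schedV J m S \<Longrightarrow> ((\<lambda>v. if v = w then -1 else 0), -1) \<in> schedRows J c S m"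
  unfolding schedRows_def by blast

lemma SAsched_job_mass:
  assumes "x \<in> SAsched J c S m r" "finite J" "j \<in> J"
  shows "(\<Sum>s<S. \<Sum>i<m. x {(j, i, s)}) = 1"
proof -
  let ?a = "\<lambda>v :: 'a \<times> nat \<times> nat. if fst v = j then 1 else (0::real)"
  have "(?a, 1) \<in> schedRows J c S m" "(\<lambda>v. - ?a v, - 1) \<in> schedRows J c S m"
    using assms(3) unfolding schedRows_def by (auto intro!: UN_I[of j] simp: fun_eq_iff)
  then have "(\<Sum>v\<in>schedV J m S. ?a v * x {v}) = 1"
    using SA_equality_row assms(1) unfolding SAsched_def by blast
  moreover have "(\<Sum>v\<in>schedV J m S. ?a v * x {v}) = (\<Sum>p\<in>{..<m} \<times> {..<S}. x {(j, p)})"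
  proof -
    have "(\<Sum>v\<in>schedV J m S. ?a v * x {v})
        = (\<Sum>j'\<in>J. \<Sum>p\<in>{..<m} \<times> {..<S}. ?a (j', p) * x {(j', p)})"
      unfolding schedV_def sum.cartesian_product by (rule sum.cong) auto
    also have "\<dots> = (\<Sum>j'\<in>J. if j' = j then (\<Sum>p\<in>{..<m} \<times> {..<S}. x {(j', p)}) else 0)"
      by (rule sum.cong) auto
    finally show ?thesis using assms(2,3) by (simp add: sum.delta)
  qed
  moreover have "(\<Sum>p\<in>{..<m} \<times> {..<S}. x {(j, p)}) = (\<Sum>i<m. \<Sum>s<S. x {(j, i, s)})"
    by (simp add: sum.cartesian_product)
  moreover have "\<dots> = (\<Sum>s<S. \<Sum>i<m. x {(j, i, s)})"
    by (rule sum.swap)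
  ultimately show ?thesis by simp
qed

lemma semimetric_on_cong:
  "(\<And>a b. a \<in> A \<Longrightarrow> b \<in> A \<Longrightarrow> d a b = d' a b) \<Longrightarrow> semimetric_on A d \<longleftrightarrow> semimetric_on A d'"
  unfolding semimetric_on_def by simp

lemma SAsched_overlap_semimetric:
  assumes "x \<in> SAsched J c S m r" "finite J" "r \<ge> 2"
  shows "semimetric_on J (\<lambda>j1 j2. 1 - (\<Sum>s<S. \<Sum>i<m. x {(j1, i, s), (j2, i, s)}))"
proof -
  let ?y = "\<lambda>j1 j2. \<Sum>s<S. \<Sum>i<m. x {(j1, i, s), (j2, i, s)}"
  have SA: "x \<in> SA r (schedV J m S) (schedRows J c S m)"
    using assms(1) unfolding SAsched_def .
  note fin = finite_schedV[OF assms(2)]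
  have inV: "(j, i, s) \<in> schedV J m S" if "j \<in> J" "i < m" "s < S" for j i s
    using that by (simp add: schedV_def)
  have mass: "(\<Sum>s<S. \<Sum>i<m. x {(j, i, s)}) = 1" if "j \<in> J" for j
    using SAsched_job_mass[OF assms(1,2) that] .
  have le1: "?y a b \<le> 1" if "a \<in> J" "b \<in> J" for a b
  proof -
    have "?y a b \<le> (\<Sum>s<S. \<Sum>i<m. x {(b, i, s)})"
      using SA_pair_le_single[OF SA fin inV inV] schedRows_upper_box[OF inV] that assms(3)
      by (intro sum_mono) auto
    then show ?thesis using mass[OF that(2)] by simp
  qed
  have tri: "?y a b + ?y b e \<le> 1 + ?y a e" if "a \<in> J" "b \<in> J" "e \<in> J" for a b e
  proof -
    have "?y a b + ?y b e = (\<Sum>s<S. \<Sum>i<m. x {(a, i, s), (b, i, s)} + x {(b, i, s), (e, i, s)})"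
      by (simp add: sum.distrib)
    also have "\<dots> \<le> (\<Sum>s<S. \<Sum>i<m. x {(b, i, s)} + x {(a, i, s), (e, i, s)})"
      using SA_pair_triangle[OF SA fin inV inV inV assms(3) schedRows_upper_box] that
      by (intro sum_mono) auto
    also have "\<dots> = 1 + ?y a e"
      using mass[OF that(2)] by (simp add: sum.distrib)
    finally show ?thesis .
  qed
  have "?y a a = 1" if "a \<in> J" for a using mass[OF that] by simp
  moreover have "?y a b = ?y b a" for a b by (simp add: insert_commute)
  ultimately show ?thesis
    unfolding semimetric_on_def using le1 tri by (auto simp: algebra_simps)
qed

theorem mainTheorem8:
  fixes J :: "'j set" and prec :: "'j \<Rightarrow> 'j \<Rightarrow> bool" and c S m r :: nat
    and x :: "('j \<times> nat \<times> nat) set \<Rightarrow> real" and y :: "'j \<Rightarrow> 'j \<Rightarrow> real" and C :: "'j \<Rightarrow> real"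
  assumes "finite J"
    and "\<forall>j\<in>J. \<not> prec j j"
    and "\<forall>j1\<in>J. \<forall>j2\<in>J. \<forall>j3\<in>J. prec j1 j2 \<longrightarrow> prec j2 j3 \<longrightarrow> prec j1 j3"
    and "(x, y, C) \<in> Q J prec c S m r"
    and "r \<ge> 5"
  shows "semimetric_on J (\<lambda>j1 j2. 1 - y j1 j2)"
proof -
  have x: "x \<in> SAsched J c S m r"
    and y: "\<forall>j1\<in>J. \<forall>j2\<in>J. y j1 j2 = (\<Sum>s<S. \<Sum>i<m. x {(j1, i, s), (j2, i, s)})"
    using assms(4) unfolding Q_def by auto
  have "semimetric_on J (\<lambda>j1 j2. 1 - (\<Sum>s<S. \<Sum>i<m. x {(j1, i, s), (j2, i, s)}))"
    using SAsched_overlap_semimetric[OF x assms(1)] assms(5) by simp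
  then show ?thesis using y by (subst semimetric_on_cong) auto
qed

end
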